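(* Let $\bar A=I_{N_sN_t}$. Assume there is $L_f>0$ with $\|f(w,t)-f(y,t)\|_2\le L_f\|w-y\|_2$ for all $w,y\in\mathbb{R}^{N_s}$, $t\in[0,T]$, and $\Delta t<\sigma_{\min}(A_{LM})/(L_f\sigma_{\max}(B_{LM}))$. Let $x\in\mathbb{R}^{N_sN_t}$ satisfy $\bar r(x)=0$ and $\tilde x\in\arg\min_{w\in\mathcal{S}}\|\bar r(w)\|_2$. Define $$\Lambda:=\frac{\sigma_{\max}(A_{LM})-\sigma_{\min}(A_{LM})+2\Delta t L_f\sigma_{\max}(B_{LM})}{\sigma_{\min}(A_{LM})-\Delta t L_f\sigma_{\max}(B_{LM})}.$$ Then $\|x-\tilde x\|_2\le(1+\Lambda)\min_{w\in\mathcal{S}}\|x-w\|_2$ and $\max_{1\le n\le N_t}\|x^n-\tilde x^n\|_2\le\sqrt{N_t}(1+\Lambda)\min_{w\in\mathcal{S}}\max_{1\le n\le N_t}\|x^n-w^n\|_2$.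
   Context: Let $f:\mathbb{R}^{N_s}\times[0,T]\to\mathbb{R}^{N_s}$ be the velocity of the ODE $\dot x=f(x,t)$, $x(0)=x^0\in\mathbb{R}^{N_s}$. Use a uniform time grid $t^n=n\Delta t$, $n=0,\dots,N_t$, $\Delta t=T/N_t$. A linear multistep scheme is given by integers $k(n)\le n$ and coefficients $\alpha_j^n,\beta_j^n\in\mathbb{R}$, $j=0,\dots,k(n)$, $n=1,\dots,N_t$, with $\alpha_0^n\neq0$. For $w=(w^1,\dots,w^{N_t})\in\mathbb{R}^{N_sN_t}$ (blocks $w^n\in\mathbb{R}^{N_s}$) set $w^0:=x^0$ and define the residual at step $n$ by $r^n(w)=\sum_{j=0}^{k(n)}\alpha_j^n w^{n-j}-\Delta t\sum_{j=0}^{k(n)}\beta_j^n f(w^{n-j},t^{n-j})$, and the space–time residual $\bar r(w)=(r^1(w),\dots,r^{N_t}(w))\in\mathbb{R}^{N_sN_t}$. Let $A_{LM},B_{LM}\in\mathbb{R}^{N_sN_t\times N_sN_t}$ be the block lower-triangular matrices (blocks of size $N_s\times N_s$) whose $(n,n-j)$ block is $\alpha_j^n I_{N_s}$, resp. $\beta_j^n I_{N_s}$, for $0\le j\le k(n)$ with $n-j\ge1$, and zero otherwise. $\sigma_{\max}(M)$, $\sigma_{\min}(M)$ denote the largest and smallest singular values of $M$; $\|\cdot\|_2$ is the Euclidean norm on $\mathbb{R}^{N_sN_t}$. The space–time trial subspace is the affine subspace $\mathcal{S}=\{(x^0,\dots,x^0)+\sum_{i=1}^{n_{st}}c_i\pi_i: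 c\in\mathbb{R}^{n_{st}}\}\subseteq\mathbb{R}^{N_sN_t}$ for given vectors $\pi_1,\dots,\pi_{n_{st}}\in\mathbb{R}^{N_sN_t}$. *)

theory Defs
  imports "HOL-Analysis.Analysis"
begin

text \<open>Space-time vectors in R^(Ns*Nt) are represented block-wise as functions
  w :: nat => real^'s, where block n (1 <= n <= Nt) is w n and Ns = CARD('s).
  Only the blocks 1..Nt are relevant.\<close>

definition st_norm :: "nat \<Rightarrow> (nat \<Rightarrow> real^'s) \<Rightarrow> real" where
  "st_norm Nt w = sqrt (\<Sum>n=1..Nt. (norm (w n))\<^sup>2)"

definition st_vec :: "nat \<Rightarrow> (nat \<Rightarrow> real^'s) \<Rightarrow> bool" where
  "st_vec Nt v \<longleftrightarrow> (\<forall>n. n \<notin> {1..Nt} \<longrightarrow> v n = 0)"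

text \<open>Block matrix whose (n,m) block is (c n m) I_Ns, applied to a space-time vector,
  and its transpose applied to a space-time vector.\<close>

definition blk_apply :: "nat \<Rightarrow> (nat \<Rightarrow> nat \<Rightarrow> real) \<Rightarrow> (nat \<Rightarrow> real^'s) \<Rightarrow> (nat \<Rightarrow> real^'s)" where
  "blk_apply Nt c w = (\<lambda>n. if n \<in> {1..Nt} then (\<Sum>m=1..Nt. c n m *\<^sub>R w m) else 0)"

definition blk_tapply :: "nat \<Rightarrow> (nat \<Rightarrow> nat \<Rightarrow> real) \<Rightarrow> (nat \<Rightarrow> real^'s) \<Rightarrow> (nat \<Rightarrow> real^'s)" where
  "blk_tapply Nt c w = (\<lambda>n. if n \<in> {1..Nt} then (\<Sum>m=1..Nt. c m n *\<^sub>R w m) else 0)"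

definition gram_eigenvalue :: "'s::finite itself \<Rightarrow> nat \<Rightarrow> (nat \<Rightarrow> nat \<Rightarrow> real) \<Rightarrow> real \<Rightarrow> bool" where
  "gram_eigenvalue _ Nt c lam \<longleftrightarrow>
     (\<exists>v :: nat \<Rightarrow> real^'s. st_vec Nt v \<and> v \<noteq> (\<lambda>_. 0) \<and>
        blk_tapply Nt c (blk_apply Nt c v) = (\<lambda>n. lam *\<^sub>R v n))"

definition sigma_max :: "'s::finite itself \<Rightarrow> nat \<Rightarrow> (nat \<Rightarrow> nat \<Rightarrow> real) \<Rightarrow> real" where
  "sigma_max S Nt c = sqrt (Max {lam. gram_eigenvalue S Nt c lam})"

definition sigma_min :: "'s::finite itself \<Rightarrow> nat \<Rightarrow> (nat \<Rightarrow> nat \<Rightarrow> real) \<Rightarrow> real" where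
  "sigma_min S Nt c = sqrt (Min {lam. gram_eigenvalue S Nt c lam})"

text \<open>Scalar coefficients of the blocks of A_LM (resp. B_LM when applied to beta):
  block (n,m) is coef n (n-m) I when 0 <= n-m <= k n and m >= 1, zero otherwise.\<close>

definition LM_mat :: "(nat \<Rightarrow> nat) \<Rightarrow> (nat \<Rightarrow> nat \<Rightarrow> real) \<Rightarrow> nat \<Rightarrow> nat \<Rightarrow> real" where
  "LM_mat k coef n m = (if 1 \<le> m \<and> m \<le> n \<and> n - m \<le> k n then coef n (n - m) else 0)"

definition ext0 :: "real^'s \<Rightarrow> (nat \<Rightarrow> real^'s) \<Rightarrow> nat \<Rightarrow> real^'s" where
  "ext0 x0 w m = (if m = 0 then x0 else w m)"

definition lm_res ::
  "(real^'s \<Rightarrow> real \<Rightarrow> real^'s) \<Rightarrow> real^'s \<Rightarrow> real \<Rightarrow> nat \<Rightarrow> (nat \<Rightarrow> nat)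
   \<Rightarrow> (nat \<Rightarrow> nat \<Rightarrow> real) \<Rightarrow> (nat \<Rightarrow> nat \<Rightarrow> real) \<Rightarrow> (nat \<Rightarrow> real^'s) \<Rightarrow> nat \<Rightarrow> real^'s" where
  "lm_res f x0 T Nt k alpha beta w n =
     (\<Sum>j=0..k n. alpha n j *\<^sub>R ext0 x0 w (n - j))
     - (T / real Nt) *\<^sub>R (\<Sum>j=0..k n. beta n j *\<^sub>R f (ext0 x0 w (n - j)) (real (n - j) * (T / real Nt)))"

definition st_res ::
  "(real^'s \<Rightarrow> real \<Rightarrow> real^'s) \<Rightarrow> real^'s \<Rightarrow> real \<Rightarrow> nat \<Rightarrow> (nat \<Rightarrow> nat)
   \<Rightarrow> (nat \<Rightarrow> nat \<Rightarrow> real) \<Rightarrow> (nat \<Rightarrow> nat \<Rightarrow> real) \<Rightarrow> (nat \<Rightarrow> real^'s) \<Rightarrow> nat \<Rightarrow> real^'s" where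
  "st_res f x0 T Nt k alpha beta w = (\<lambda>n. if n \<in> {1..Nt} then lm_res f x0 T Nt k alpha beta w n else 0)"

definition trial_space :: "real^'s \<Rightarrow> (nat \<Rightarrow> nat \<Rightarrow> real^'s) \<Rightarrow> nat \<Rightarrow> (nat \<Rightarrow> real^'s) set" where
  "trial_space x0 Pi_b nst = {w. \<exists>c :: nat \<Rightarrow> real. w = (\<lambda>n. x0 + (\<Sum>i=1..nst. c i *\<^sub>R Pi_b i n))}"

end

theory Submission
  imports Defs
begin

text \<open>The residual map is a Lipschitz perturbation of the linear map A_LM:
  rbar(w) - rbar(y) = A_LM (w - y) - dt B_LM (F(w) - F(y)), where F applies f blockwise.
  Bounding the block matrices by their extreme singular values and F by its Lipschitz constant
  makes rbar bi-Lipschitz, c1 |w - y| <= |rbar(w) - rbar(y)| <= c2 |w - y| with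
  c1 = sigma_min(A_LM) - dt L_f sigma_max(B_LM) > 0, c2 = sigma_max(A_LM) + dt L_f sigma_max(B_LM),
  and 1 + Lambda = c2 / c1. As rbar(x) = 0 and xt minimises |rbar| on S, for every w in S
  c1 |x - xt| <= |rbar(xt)| <= |rbar(w)| <= c2 |x - w|; the max-norm estimate follows from
  max_n |v^n| <= |v| <= sqrt(N_t) max_n |v^n|.

  The singular value bounds are Rayleigh quotient bounds: the extrema of |M u|^2 over the unit
  sphere, which is compact in the product topology, are eigenvalues of M^T M, and these
  eigenvalues are finitely many, so they are the maximum and minimum of all eigenvalues.\<close>

section \<open>The space-time inner product\<close>

definition st_inner :: "nat \<Rightarrow> (nat \<Rightarrow> real^'s) \<Rightarrow> (nat \<Rightarrow> real^'s) \<Rightarrow> real" where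
  "st_inner N u v = (\<Sum>n=1..N. u n \<bullet> v n)"

lemma st_inner_commute: "st_inner N u v = st_inner N v u"
  unfolding st_inner_def by (simp add: inner_commute)

lemma st_inner_self: "st_inner N v v = (\<Sum>n=1..N. (norm (v n))\<^sup>2)"
  unfolding st_inner_def by (simp add: power2_norm_eq_inner)

lemma st_inner_nonneg: "0 \<le> st_inner N v v"
  unfolding st_inner_self by (simp add: sum_nonneg)

lemma norm_le_st_inner: "n \<in> {1..N} \<Longrightarrow> (norm (v n))\<^sup>2 \<le> st_inner N v v"
  unfolding st_inner_self by (rule member_le_sum) auto

lemma st_inner_self_eq_0_iff: "st_vec N v \<Longrightarrow> st_inner N v v = 0 \<longleftrightarrow> v = (\<lambda>_. 0)"
  unfolding st_inner_self st_vec_def by (subst sum_nonneg_eq_0_iff) fastforce+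

lemma st_inner_add_scaleR_left:
  "st_inner N (\<lambda>n. u n + t *\<^sub>R v n) w = st_inner N u w + t * st_inner N v w"
  unfolding st_inner_def by (simp add: inner_add_left sum.distrib sum_distrib_left)

lemma st_inner_add_scaleR_right:
  "st_inner N w (\<lambda>n. u n + t *\<^sub>R v n) = st_inner N w u + t * st_inner N w v"
  unfolding st_inner_def by (simp add: inner_add_right sum.distrib sum_distrib_left)

lemma st_inner_scaleR_left: "st_inner N (\<lambda>n. t *\<^sub>R v n) w = t * st_inner N v w"
  unfolding st_inner_def by (simp add: sum_distrib_left)

lemma st_inner_scaleR_right: "st_inner N w (\<lambda>n. t *\<^sub>R v n) = t * st_inner N w v"
  unfolding st_inner_def by (simp add: sum_distrib_left)

lemma st_inner_diff_sum_scaleR_left: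
  "st_inner N (\<lambda>n. u n - (\<Sum>l\<in>F. a l *\<^sub>R e l n)) w = st_inner N u w - (\<Sum>l\<in>F. a l * st_inner N (e l) w)"
proof -
  have "st_inner N (\<lambda>n. u n - (\<Sum>l\<in>F. a l *\<^sub>R e l n)) w
      = st_inner N u w - (\<Sum>n=1..N. \<Sum>l\<in>F. a l * (e l n \<bullet> w n))"
    unfolding st_inner_def by (simp add: inner_diff_left inner_sum_left sum_subtractf)
  also have "(\<Sum>n=1..N. \<Sum>l\<in>F. a l * (e l n \<bullet> w n)) = (\<Sum>l\<in>F. a l * st_inner N (e l) w)"
    unfolding st_inner_def sum_distrib_left by (rule sum.swap)
  finally show ?thesis .
qed

lemma st_inner_normalize:
  assumes "0 < st_inner N u u"
  defines "a \<equiv> inverse (sqrt (st_inner N u u))"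
  shows "st_inner N (\<lambda>n. a *\<^sub>R u n) (\<lambda>n. a *\<^sub>R u n) = 1"
proof -
  have "a * a * st_inner N u u = 1"
    using assms by (simp flip: inverse_mult_distrib)
  then show ?thesis by (simp add: st_inner_scaleR_left st_inner_scaleR_right mult.assoc)
qed

lemma st_unit_vector_exists:
  assumes "1 \<le> N"
  shows "\<exists>e::nat \<Rightarrow> real^'s. st_vec N e \<and> st_inner N e e = 1"
proof -
  fix i :: 's
  define e where "e = (\<lambda>n::nat. if n = 1 then axis i 1 else (0::real^'s))"
  have "st_inner N e e = (\<Sum>n=1..N. if n = 1 then 1 else 0)"
    unfolding st_inner_def e_def by (intro sum.cong) (auto simp: inner_axis_axis)
  then show ?thesis
    using assms by (intro exI[of _ e]) (auto simp: st_vec_def e_def)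
qed

lemma st_norm_eq_sqrt_inner: "st_norm N v = sqrt (st_inner N v v)"
  unfolding st_norm_def st_inner_self ..

lemma st_norm_eq_L2_set: "st_norm N v = L2_set (\<lambda>n. norm (v n)) {1..N}"
  unfolding st_norm_def L2_set_def by simp

lemma st_norm_scaleR: "st_norm N (\<lambda>n. a *\<^sub>R v n) = \<bar>a\<bar> * st_norm N v"
  unfolding st_norm_def
  by (simp add: power_mult_distrib sum_distrib_left[symmetric] real_sqrt_mult)

lemma st_norm_minus_commute: "st_norm N (\<lambda>n. u n - v n) = st_norm N (\<lambda>n. v n - u n)"
  unfolding st_norm_def by (simp add: norm_minus_commute)

lemma st_norm_triangle: "st_norm N (\<lambda>n. u n + v n) \<le> st_norm N u + st_norm N v"
proof -
  have "st_norm N (\<lambda>n. u n + v n) \<le> L2_set (\<lambda>n. norm (u n) + norm (v n)) {1..N}"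
    unfolding st_norm_eq_L2_set by (rule L2_set_mono) (auto simp: norm_triangle_ineq)
  also have "\<dots> \<le> st_norm N u + st_norm N v"
    unfolding st_norm_eq_L2_set by (rule L2_set_triangle_ineq)
  finally show ?thesis .
qed

lemma st_norm_triangle_diff: "st_norm N (\<lambda>n. u n - v n) \<le> st_norm N u + st_norm N v"
  using st_norm_triangle[of N u "\<lambda>n. - v n"] st_norm_scaleR[of N "-1" v] by simp

lemma st_norm_reverse_triangle: "st_norm N u - st_norm N v \<le> st_norm N (\<lambda>n. u n - v n)"
  using st_norm_triangle[of N "\<lambda>n. u n - v n" v] by simp

lemma Max_norm_le_st_norm:
  assumes "1 \<le> N"
  shows "(MAX n\<in>{1..N}. norm (v n)) \<le> st_norm N v"
  using assms unfolding st_norm_eq_L2_set by (intro Max.boundedI) (auto intro: member_le_L2_set)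

lemma st_norm_le_sqrt_Max_norm:
  assumes "1 \<le> N"
  shows "st_norm N v \<le> sqrt (real N) * (MAX n\<in>{1..N}. norm (v n))"
proof -
  define M where "M = (MAX n\<in>{1..N}. norm (v n))"
  have le_M: "norm (v n) \<le> M" if "n \<in> {1..N}" for n
    unfolding M_def using that by (simp add: Max_ge)
  then have "st_norm N v \<le> sqrt (\<Sum>n=1..N. M\<^sup>2)"
    unfolding st_norm_def by (intro real_sqrt_le_mono sum_mono power_mono) auto
  also have "\<dots> = sqrt (real N) * M"
    using order_trans[OF norm_ge_zero le_M[of 1]] assms by (simp add: real_sqrt_mult)
  finally show ?thesis unfolding M_def .
qed

section \<open>Block matrices\<close>

lemma blk_apply_cong: "(\<And>m. m \<in> {1..N} \<Longrightarrow> u m = v m) \<Longrightarrow> blk_apply N c u = blk_apply N c v"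
  unfolding blk_apply_def by (auto intro!: sum.cong)

lemma blk_apply_add_scaleR:
  "blk_apply N c (\<lambda>n. u n + t *\<^sub>R v n) = (\<lambda>n. blk_apply N c u n + t *\<^sub>R blk_apply N c v n)"
  unfolding blk_apply_def by (auto simp: sum.distrib scaleR_add_right scaleR_sum_right mult.commute)

lemma blk_apply_scaleR: "blk_apply N c (\<lambda>n. t *\<^sub>R v n) = (\<lambda>n. t *\<^sub>R blk_apply N c v n)"
  unfolding blk_apply_def by (auto simp: scaleR_sum_right mult.commute)

lemma blk_tapply_eq_blk_apply_transpose: "blk_tapply N c = blk_apply N (\<lambda>n m. c m n)"
  unfolding blk_tapply_def blk_apply_def ..

lemma st_vec_blk_tapply: "st_vec N (blk_tapply N c w)"
  unfolding st_vec_def blk_tapply_def by auto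

lemma st_inner_blk_apply_adjoint: "st_inner N (blk_apply N c u) w = st_inner N u (blk_tapply N c w)"
proof -
  have "st_inner N (blk_apply N c u) w = (\<Sum>n=1..N. \<Sum>m=1..N. c n m * (u m \<bullet> w n))"
    unfolding st_inner_def blk_apply_def by (auto simp: inner_sum_left intro: sum.cong)
  also have "\<dots> = (\<Sum>m=1..N. \<Sum>n=1..N. c n m * (u m \<bullet> w n))" by (rule sum.swap)
  also have "\<dots> = st_inner N u (blk_tapply N c w)"
    unfolding st_inner_def blk_tapply_def by (auto simp: inner_sum_right intro: sum.cong)
  finally show ?thesis .
qed

lemma st_inner_gram:
  "st_inner N (blk_tapply N c (blk_apply N c u)) w = st_inner N (blk_apply N c u) (blk_apply N c w)"
  using st_inner_blk_apply_adjoint[of N c w "blk_apply N c u"] by (simp add: st_inner_commute)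

section \<open>Rayleigh quotients and singular values\<close>

lemma continuous_on_st_inner [continuous_intros]:
  assumes "continuous_on A f" "continuous_on A g"
  shows "continuous_on A (\<lambda>u. st_inner N (f u) (g u))"
  unfolding st_inner_def
  by (intro continuous_on_sum continuous_on_inner
      continuous_on_product_then_coordinatewise[OF assms(1)]
      continuous_on_product_then_coordinatewise[OF assms(2)])

lemma continuous_on_blk_apply [continuous_intros]:
  assumes "continuous_on A f"
  shows "continuous_on A (\<lambda>u. blk_apply N c (f u))"
proof (intro continuous_on_coordinatewise_then_product)
  fix n
  show "continuous_on A (\<lambda>u. blk_apply N c (f u) n)"
    unfolding blk_apply_def
    by (cases "n \<in> {1..N}") (simp_all add: continuous_on_product_then_coordinatewise[OF assms]
        continuous_on_sum continuous_on_scaleR del: atLeastAtMost_iff)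
qed

lemma compact_PiE_UNIV:
  fixes K :: "'a \<Rightarrow> 'b::topological_space set"
  assumes "\<And>i. compact (K i)"
  shows "compact (Pi\<^sub>E UNIV K)"
  using assms compactin_PiE[of "\<lambda>i. euclidean" UNIV K]
  by (simp add: euclidean_product_topology)

lemma compact_st_sphere: "compact {u::nat \<Rightarrow> real^'s. st_vec N u \<and> st_inner N u u = 1}"
proof -
  define K where "K n = (if n \<in> {1..N} then cball 0 1 else {0::real^'s})" for n
  have "{u::nat \<Rightarrow> real^'s. st_vec N u \<and> st_inner N u u = 1} = Pi\<^sub>E UNIV K \<inter> {u. st_inner N u u = 1}"
  proof (intro set_eqI iffI)
    fix u :: "nat \<Rightarrow> real^'s"
    assume "u \<in> Pi\<^sub>E UNIV K \<inter> {u. st_inner N u u = 1}"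
    then show "u \<in> {u. st_vec N u \<and> st_inner N u u = 1}"
      by (auto simp: K_def st_vec_def PiE_iff split: if_splits)
  next
    fix u :: "nat \<Rightarrow> real^'s"
    assume u: "u \<in> {u. st_vec N u \<and> st_inner N u u = 1}"
    have "norm (u n) \<le> 1" if "n \<in> {1..N}" for n
      using norm_le_st_inner[OF that, of u] u by (simp add: power_le_one_iff abs_le_square_iff[symmetric])
    then show "u \<in> Pi\<^sub>E UNIV K \<inter> {u. st_inner N u u = 1}"
      using u by (auto simp: K_def st_vec_def PiE_iff)
  qed
  moreover have "compact (Pi\<^sub>E UNIV K)" by (rule compact_PiE_UNIV) (simp add: K_def)
  moreover have "closed {u::nat \<Rightarrow> real^'s. st_inner N u u = 1}"
    by (intro closed_Collect_eq continuous_intros)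
  ultimately show ?thesis by (simp add: compact_Int_closed)
qed

lemma quadratic_nonneg_imp_linear_coeff_zero:
  fixes b d :: real
  assumes "\<And>t. 0 \<le> 2 * t * b + t * t * d"
  shows "b = 0"
proof -
  define D where "D = \<bar>d\<bar> + 1"
  define t where "t = - b / D"
  have tD: "t * D = - b" unfolding t_def D_def by simp
  have "0 \<le> D * D * (2 * t * b + t * t * d)"
    using assms[of t] by (simp add: D_def)
  also have "\<dots> = 2 * b * (t * D) * D + d * (t * D) * (t * D)"
    by (simp add: algebra_simps)
  also have "\<dots> = b * b * (d - 2 * D)"
    unfolding tD by (simp add: algebra_simps)
  finally have "0 \<le> b * b * (d - 2 * D)" .
  moreover have "d - 2 * D < 0" by (simp add: D_def abs_if)
  ultimately show ?thesis by (auto simp: zero_le_mult_iff mult_le_0_iff)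
qed

lemma gram_eigenvalue_rayleigh:
  assumes "gram_eigenvalue TYPE('s) N c l"
  obtains w :: "nat \<Rightarrow> real^'s" where "st_vec N w" "0 < st_inner N w w"
    "blk_tapply N c (blk_apply N c w) = (\<lambda>n. l *\<^sub>R w n)"
    "st_inner N (blk_apply N c w) (blk_apply N c w) = l * st_inner N w w"
proof -
  obtain w :: "nat \<Rightarrow> real^'s" where w: "st_vec N w" "w \<noteq> (\<lambda>_. 0)"
    and eig: "blk_tapply N c (blk_apply N c w) = (\<lambda>n. l *\<^sub>R w n)"
    using assms unfolding gram_eigenvalue_def by blast
  have "0 < st_inner N w w"
    using w st_inner_self_eq_0_iff[OF w(1)] st_inner_nonneg[of N w] by fastforce
  moreover have "st_inner N (blk_apply N c w) (blk_apply N c w) = l * st_inner N w w"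
    using st_inner_gram[of N c w w] eig by (simp add: st_inner_scaleR_left)
  ultimately show ?thesis using that w(1) eig by blast
qed

lemma gram_eigenvalue_unit_eigenvector:
  assumes "gram_eigenvalue TYPE('s) N c l"
  obtains e :: "nat \<Rightarrow> real^'s" where "st_vec N e" "st_inner N e e = 1"
    "blk_tapply N c (blk_apply N c e) = (\<lambda>n. l *\<^sub>R e n)"
proof -
  obtain w :: "nat \<Rightarrow> real^'s" where w: "st_vec N w" "0 < st_inner N w w"
    and eig: "blk_tapply N c (blk_apply N c w) = (\<lambda>n. l *\<^sub>R w n)"
    by (rule gram_eigenvalue_rayleigh[OF assms])
  define a where "a = inverse (sqrt (st_inner N w w))"
  have "blk_tapply N c (blk_apply N c (\<lambda>n. a *\<^sub>R w n)) = (\<lambda>n. l *\<^sub>R a *\<^sub>R w n)"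
    using eig by (simp add: blk_tapply_eq_blk_apply_transpose blk_apply_scaleR mult.commute)
  moreover have "st_vec N (\<lambda>n. a *\<^sub>R w n)" using w(1) by (simp add: st_vec_def)
  ultimately show ?thesis
    using that st_inner_normalize[OF w(2)] unfolding a_def by blast
qed

lemma gram_eigenvectors_orthogonal:
  assumes "blk_tapply N c (blk_apply N c u) = (\<lambda>n. l *\<^sub>R u n)"
    and "blk_tapply N c (blk_apply N c v) = (\<lambda>n. m *\<^sub>R v n)"
    and "l \<noteq> m"
  shows "st_inner N u v = 0"
proof -
  have "l * st_inner N u v = m * st_inner N u v"
    using st_inner_gram[of N c u v] st_inner_gram[of N c v u] assms(1,2)
    by (simp add: st_inner_scaleR_left st_inner_commute)
  then show ?thesis using assms(3) by simp
qed

lemma bessel_inequality: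
  assumes "finite F"
    and orthonormal: "\<forall>l\<in>F. \<forall>m\<in>F. st_inner N (e l) (e m) = (if l = m then 1 else 0)"
  shows "(\<Sum>l\<in>F. (st_inner N (e l) b)\<^sup>2) \<le> st_inner N b b"
proof -
  define a where "a l = st_inner N (e l) b" for l
  define d where "d = (\<lambda>n. b n - (\<Sum>l\<in>F. a l *\<^sub>R e l n))"
  have d_orth: "st_inner N d (e m) = 0" if "m \<in> F" for m
  proof -
    have "(\<Sum>l\<in>F. a l * st_inner N (e l) (e m)) = (\<Sum>l\<in>F. if l = m then a l else 0)"
      using orthonormal that by (intro sum.cong) auto
    then show ?thesis
      using assms(1) that unfolding d_def st_inner_diff_sum_scaleR_left
      by (simp add: a_def st_inner_commute)
  qed
  have "st_inner N d d = st_inner N b d - (\<Sum>l\<in>F. a l * st_inner N (e l) d)"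
    using st_inner_diff_sum_scaleR_left[where N=N and u=b and F=F and a=a and e=e and w=d]
    by (simp add: d_def[symmetric])
  also have "\<dots> = st_inner N d b"
    using d_orth by (simp add: st_inner_commute)
  also have "\<dots> = st_inner N b b - (\<Sum>l\<in>F. (st_inner N (e l) b)\<^sup>2)"
    unfolding d_def st_inner_diff_sum_scaleR_left by (simp add: a_def power2_eq_square)
  finally show ?thesis using st_inner_nonneg[of N d] by simp
qed

text \<open>Unit eigenvectors of distinct eigenvalues are orthonormal, and Bessel's inequality against
  the N CARD('s) coordinate vectors bounds their number.\<close>

lemma finite_gram_eigenvalues: "finite {l. gram_eigenvalue TYPE('s::finite) N c l}"
proof (rule ccontr)
  assume "infinite {l. gram_eigenvalue TYPE('s) N c l}"
  then obtain F where F: "F \<subseteq> {l. gram_eigenvalue TYPE('s) N c l}" "finite F"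
    "card F = Suc (N * CARD('s))"
    by (meson infinite_arbitrarily_large)
  have "\<forall>l\<in>F. \<exists>e::nat \<Rightarrow> real^'s. st_vec N e \<and> st_inner N e e = 1
      \<and> blk_tapply N c (blk_apply N c e) = (\<lambda>n. l *\<^sub>R e n)"
  proof
    fix l assume "l \<in> F"
    with F(1) obtain e :: "nat \<Rightarrow> real^'s" where "st_vec N e" "st_inner N e e = 1"
      "blk_tapply N c (blk_apply N c e) = (\<lambda>n. l *\<^sub>R e n)"
      by (auto elim: gram_eigenvalue_unit_eigenvector)
    then show "\<exists>e::nat \<Rightarrow> real^'s. st_vec N e \<and> st_inner N e e = 1
      \<and> blk_tapply N c (blk_apply N c e) = (\<lambda>n. l *\<^sub>R e n)" by blast
  qed
  from bchoice[OF this] obtain e :: "real \<Rightarrow> nat \<Rightarrow> real^'s" where e: "\<forall>l\<in>F. st_vec N (e l) \<and>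
      st_inner N (e l) (e l) = 1 \<and> blk_tapply N c (blk_apply N c (e l)) = (\<lambda>n. l *\<^sub>R e l n)"
    by blast
  have orthonormal: "\<forall>l\<in>F. \<forall>m\<in>F. st_inner N (e l) (e m) = (if l = m then 1 else 0)"
  proof (intro ballI)
    fix l m assume "l \<in> F" "m \<in> F"
    then show "st_inner N (e l) (e m) = (if l = m then 1 else 0)"
      using e gram_eigenvectors_orthogonal[of N c "e l" l "e m" m] by (cases "l = m") simp_all
  qed
  define b where "b n i = (\<lambda>m. if m = n then axis i 1 else (0::real^'s))" for n :: nat and i :: 's
  have inner_b: "st_inner N v (b n i) = v n $ i" if "n \<in> {1..N}" for v n i
  proof -
    have "st_inner N v (b n i) = (\<Sum>m=1..N. if m = n then v m \<bullet> axis i 1 else 0)"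
      unfolding st_inner_def b_def by (intro sum.cong) auto
    with that show ?thesis by (simp add: inner_axis)
  qed
  have bessel_b: "(\<Sum>l\<in>F. (st_inner N (e l) (b n i))\<^sup>2) \<le> 1" if "n \<in> {1..N}" for n i
    using bessel_inequality[OF F(2) orthonormal, of "b n i"] inner_b[OF that, of "b n i" i]
    by (simp add: b_def)
  have "real (card F) = (\<Sum>l\<in>F. st_inner N (e l) (e l))" using e by simp
  also have "\<dots> = (\<Sum>l\<in>F. \<Sum>n=1..N. \<Sum>i\<in>UNIV. (e l n $ i)\<^sup>2)"
    unfolding st_inner_def inner_vec_def by (simp add: power2_eq_square)
  also have "\<dots> = (\<Sum>n=1..N. \<Sum>l\<in>F. \<Sum>i\<in>UNIV. (e l n $ i)\<^sup>2)"
    by (rule sum.swap)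
  also have "\<dots> = (\<Sum>n=1..N. \<Sum>i\<in>UNIV. \<Sum>l\<in>F. (e l n $ i)\<^sup>2)"
    by (intro sum.cong refl sum.swap)
  also have "\<dots> = (\<Sum>n=1..N. \<Sum>i\<in>UNIV. \<Sum>l\<in>F. (st_inner N (e l) (b n i))\<^sup>2)"
    by (intro sum.cong refl) (simp add: inner_b)
  also have "\<dots> \<le> (\<Sum>n=1..N. \<Sum>i\<in>(UNIV::'s set). 1)"
    by (intro sum_mono bessel_b)
  finally show False using F(3) by simp
qed

lemma rayleigh_bound_from_unit_sphere:
  fixes u :: "nat \<Rightarrow> real^'s"
  assumes "st_vec N u"
    and sphere: "\<forall>v::nat \<Rightarrow> real^'s. st_vec N v \<and> st_inner N v v = 1 \<longrightarrow>
                   s * st_inner N (blk_apply N c v) (blk_apply N c v) \<le> s * q"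
  shows "s * st_inner N (blk_apply N c u) (blk_apply N c u) \<le> s * q * st_inner N u u"
proof (cases "st_inner N u u = 0")
  case True
  then have "u = (\<lambda>_. 0)" using st_inner_self_eq_0_iff[OF assms(1)] by blast
  then show ?thesis using True by (simp add: blk_apply_def st_inner_def)
next
  case False
  define p where "p = st_inner N u u"
  have p: "0 < p" using False st_inner_nonneg[of N u] unfolding p_def by linarith
  define a where "a = inverse (sqrt p)"
  have aa: "a * a = inverse p" using p by (simp add: a_def flip: inverse_mult_distrib)
  have "s * st_inner N (blk_apply N c (\<lambda>n. a *\<^sub>R u n)) (blk_apply N c (\<lambda>n. a *\<^sub>R u n)) \<le> s * q"
    using sphere st_inner_normalize[of N u] p assms(1)
    unfolding a_def p_def by (simp add: st_vec_def)
  moreover have "st_inner N (blk_apply N c (\<lambda>n. a *\<^sub>R u n)) (blk_apply N c (\<lambda>n. a *\<^sub>R u n))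
      = inverse p * st_inner N (blk_apply N c u) (blk_apply N c u)"
    by (simp add: blk_apply_scaleR st_inner_scaleR_left st_inner_scaleR_right mult.assoc[symmetric] aa)
  ultimately have "inverse p * (s * st_inner N (blk_apply N c u) (blk_apply N c u)) \<le> s * q"
    by (simp add: mult.left_commute)
  then show ?thesis using p unfolding p_def[symmetric] by (simp add: field_simps)
qed

lemma rayleigh_extremal_gram_eigenvalue:
  fixes v :: "nat \<Rightarrow> real^('s::finite)"
  assumes v: "st_vec N v" "v \<noteq> (\<lambda>_. 0)" and "s \<noteq> 0"
    and attained: "st_inner N (blk_apply N c v) (blk_apply N c v) = q * st_inner N v v"
    and bound: "\<forall>u::nat \<Rightarrow> real^'s. st_vec N u \<longrightarrow>
                  s * st_inner N (blk_apply N c u) (blk_apply N c u) \<le> s * q * st_inner N u u"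
  shows "gram_eigenvalue TYPE('s) N c q"
proof -
  define defect where
    "defect u w = q * st_inner N u w - st_inner N (blk_apply N c u) (blk_apply N c w)"
    for u w :: "nat \<Rightarrow> real^'s"
  have expand: "defect (\<lambda>n. v n + t *\<^sub>R w n) (\<lambda>n. v n + t *\<^sub>R w n)
      = defect v v + 2 * t * defect v w + t * t * defect w w" for w t
    unfolding defect_def blk_apply_add_scaleR
    by (simp add: st_inner_add_scaleR_left st_inner_add_scaleR_right algebra_simps
        st_inner_commute[of N w v] st_inner_commute[of N "blk_apply N c w" "blk_apply N c v"])
  have defect_vv: "defect v v = 0" using attained by (simp add: defect_def)
  text \<open>The defect form is semidefinite (up to the sign s) and vanishes at v,
    so v lies in its kernel.\<close>
  have defect_orth: "defect v w = 0" if w: "st_vec N w" for w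
  proof -
    have "0 \<le> 2 * t * (s * defect v w) + t * t * (s * defect w w)" for t
    proof -
      have "st_vec N (\<lambda>n. v n + t *\<^sub>R w n)" using v(1) w by (simp add: st_vec_def)
      then have "0 \<le> s * defect (\<lambda>n. v n + t *\<^sub>R w n) (\<lambda>n. v n + t *\<^sub>R w n)"
        using bound by (simp add: defect_def right_diff_distrib mult.assoc)
      then show ?thesis unfolding expand defect_vv by (simp add: algebra_simps)
    qed
    then have "s * defect v w = 0" by (rule quadratic_nonneg_imp_linear_coeff_zero)
    with \<open>s \<noteq> 0\<close> show ?thesis by simp
  qed
  define z where "z = (\<lambda>n. q *\<^sub>R v n + (-1) *\<^sub>R blk_tapply N c (blk_apply N c v) n)"
  have z_vec: "st_vec N z" using v(1) st_vec_blk_tapply[of N c] by (simp add: st_vec_def z_def)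
  have "st_inner N z z = defect v z"
    unfolding z_def st_inner_add_scaleR_left
    by (simp add: st_inner_scaleR_left st_inner_gram defect_def z_def[symmetric])
  then have "z = (\<lambda>_. 0)" using defect_orth[OF z_vec] st_inner_self_eq_0_iff[OF z_vec] by simp
  then have "blk_tapply N c (blk_apply N c v) = (\<lambda>n. q *\<^sub>R v n)"
    by (simp add: z_def fun_eq_iff)
  with v show ?thesis unfolding gram_eigenvalue_def by blast
qed

text \<open>The sign s selects the maximum (s = 1) or the minimum (s = -1) of the Rayleigh quotient.\<close>

lemma rayleigh_extremum_gram_eigenvalue:
  assumes "1 \<le> N" "s \<noteq> 0"
  obtains q where "gram_eigenvalue TYPE('s::finite) N c q"
    and "\<forall>u::nat \<Rightarrow> real^'s. st_vec N u \<longrightarrow>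
           s * st_inner N (blk_apply N c u) (blk_apply N c u) \<le> s * q * st_inner N u u"
proof -
  define U where "U = {u::nat \<Rightarrow> real^'s. st_vec N u \<and> st_inner N u u = 1}"
  have "compact U" unfolding U_def by (rule compact_st_sphere)
  moreover have "U \<noteq> {}" using st_unit_vector_exists[OF assms(1)] by (auto simp: U_def)
  moreover have "continuous_on U (\<lambda>u. s * st_inner N (blk_apply N c u) (blk_apply N c u))"
    by (intro continuous_intros)
  ultimately have "\<exists>v\<in>U. \<forall>u\<in>U. s * st_inner N (blk_apply N c u) (blk_apply N c u)
                      \<le> s * st_inner N (blk_apply N c v) (blk_apply N c v)"
    by (rule continuous_attains_sup)
  then obtain v where v: "v \<in> U"
    and max: "\<forall>u\<in>U. s * st_inner N (blk_apply N c u) (blk_apply N c u)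
                      \<le> s * st_inner N (blk_apply N c v) (blk_apply N c v)" ..
  define q where "q = st_inner N (blk_apply N c v) (blk_apply N c v)"
  have bound: "\<forall>u::nat \<Rightarrow> real^'s. st_vec N u \<longrightarrow>
      s * st_inner N (blk_apply N c u) (blk_apply N c u) \<le> s * q * st_inner N u u"
  proof (intro allI impI)
    fix u :: "nat \<Rightarrow> real^'s"
    assume "st_vec N u"
    then show "s * st_inner N (blk_apply N c u) (blk_apply N c u) \<le> s * q * st_inner N u u"
      by (rule rayleigh_bound_from_unit_sphere) (use max in \<open>simp add: U_def q_def\<close>)
  qed
  have v_unit: "st_vec N v" "st_inner N v v = 1" using v by (simp_all add: U_def)
  then have "v \<noteq> (\<lambda>_. 0)" by (auto simp: st_inner_def)
  moreover have "st_inner N (blk_apply N c v) (blk_apply N c v) = q * st_inner N v v"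
    by (simp add: q_def v_unit(2))
  ultimately have "gram_eigenvalue TYPE('s) N c q"
    using rayleigh_extremal_gram_eigenvalue[OF v_unit(1) _ assms(2) _ bound] by blast
  then show ?thesis using bound by (rule that)
qed

lemma gram_eigenvalue_le_rayleigh_extremum:
  assumes "gram_eigenvalue TYPE('s::finite) N c l"
    and bound: "\<forall>u::nat \<Rightarrow> real^'s. st_vec N u \<longrightarrow>
                  s * st_inner N (blk_apply N c u) (blk_apply N c u) \<le> s * q * st_inner N u u"
  shows "s * l \<le> s * q"
proof -
  obtain w :: "nat \<Rightarrow> real^'s" where w: "st_vec N w" "0 < st_inner N w w"
    and rayleigh: "st_inner N (blk_apply N c w) (blk_apply N c w) = l * st_inner N w w"
    using assms(1) by (rule gram_eigenvalue_rayleigh)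
  have "s * l * st_inner N w w \<le> s * q * st_inner N w w"
    using bound[rule_format, OF w(1)] by (simp add: rayleigh mult.assoc)
  then show ?thesis using w(2) by (rule mult_right_le_imp_le)
qed

lemma rayleigh_le_Max_gram_eigenvalue:
  fixes u :: "nat \<Rightarrow> real^('s::finite)"
  assumes "1 \<le> N" "st_vec N u"
  shows "st_inner N (blk_apply N c u) (blk_apply N c u)
           \<le> Max {l. gram_eigenvalue TYPE('s) N c l} * st_inner N u u"
proof -
  obtain q where q: "gram_eigenvalue TYPE('s) N c q"
    and bound: "\<forall>u::nat \<Rightarrow> real^'s. st_vec N u \<longrightarrow>
                  1 * st_inner N (blk_apply N c u) (blk_apply N c u) \<le> 1 * q * st_inner N u u"
    using rayleigh_extremum_gram_eigenvalue[OF assms(1), of 1] by auto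
  have "Max {l. gram_eigenvalue TYPE('s) N c l} = q"
    using q gram_eigenvalue_le_rayleigh_extremum[OF _ bound]
    by (intro Max_eqI finite_gram_eigenvalues) auto
  with bound[rule_format, OF assms(2)] show ?thesis by simp
qed

lemma Min_gram_eigenvalue_le_rayleigh:
  fixes u :: "nat \<Rightarrow> real^('s::finite)"
  assumes "1 \<le> N" "st_vec N u"
  shows "Min {l. gram_eigenvalue TYPE('s) N c l} * st_inner N u u
           \<le> st_inner N (blk_apply N c u) (blk_apply N c u)"
proof -
  obtain q where q: "gram_eigenvalue TYPE('s) N c q"
    and bound: "\<forall>u::nat \<Rightarrow> real^'s. st_vec N u \<longrightarrow>
                  -1 * st_inner N (blk_apply N c u) (blk_apply N c u) \<le> -1 * q * st_inner N u u"
    using rayleigh_extremum_gram_eigenvalue[OF assms(1), of "-1"] by auto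
  have "Min {l. gram_eigenvalue TYPE('s) N c l} = q"
    using q gram_eigenvalue_le_rayleigh_extremum[OF _ bound]
    by (intro Min_eqI finite_gram_eigenvalues) auto
  with bound[rule_format, OF assms(2)] show ?thesis by simp
qed

lemma st_vec_restriction:
  fixes u :: "nat \<Rightarrow> real^'s"
  obtains r where "st_vec N r" "blk_apply N c r = blk_apply N c u" "st_inner N r r = st_inner N u u"
proof
  let ?r = "\<lambda>n. if n \<in> {1..N} then u n else 0"
  show "st_vec N ?r" by (simp add: st_vec_def)
  show "blk_apply N c ?r = blk_apply N c u" by (rule blk_apply_cong) simp
  show "st_inner N ?r ?r = st_inner N u u" unfolding st_inner_def by (rule sum.cong) simp_all
qed

lemma st_norm_blk_apply_le_sigma_max:
  fixes u :: "nat \<Rightarrow> real^('s::finite)"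
  assumes "1 \<le> N"
  shows "st_norm N (blk_apply N c u) \<le> sigma_max TYPE('s) N c * st_norm N u"
proof -
  obtain r where r: "st_vec N r" "blk_apply N c r = blk_apply N c u"
    "st_inner N r r = st_inner N u u"
    by (rule st_vec_restriction)
  have "st_norm N (blk_apply N c u) = sqrt (st_inner N (blk_apply N c r) (blk_apply N c r))"
    by (simp add: r(2) st_norm_eq_sqrt_inner)
  also have "\<dots> \<le> sqrt (Max {l. gram_eigenvalue TYPE('s) N c l} * st_inner N r r)"
    using rayleigh_le_Max_gram_eigenvalue[OF assms r(1)] by simp
  also have "\<dots> = sigma_max TYPE('s) N c * st_norm N u"
    by (simp add: sigma_max_def st_norm_eq_sqrt_inner real_sqrt_mult r(3))
  finally show ?thesis .
qed

lemma sigma_min_le_st_norm_blk_apply: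
  fixes u :: "nat \<Rightarrow> real^('s::finite)"
  assumes "1 \<le> N"
  shows "sigma_min TYPE('s) N c * st_norm N u \<le> st_norm N (blk_apply N c u)"
proof -
  obtain r where r: "st_vec N r" "blk_apply N c r = blk_apply N c u"
    "st_inner N r r = st_inner N u u"
    by (rule st_vec_restriction)
  have "sigma_min TYPE('s) N c * st_norm N u
      = sqrt (Min {l. gram_eigenvalue TYPE('s) N c l} * st_inner N r r)"
    by (simp add: sigma_min_def st_norm_eq_sqrt_inner real_sqrt_mult r(3))
  also have "\<dots> \<le> sqrt (st_inner N (blk_apply N c r) (blk_apply N c r))"
    using Min_gram_eigenvalue_le_rayleigh[OF assms r(1)] by simp
  also have "\<dots> = st_norm N (blk_apply N c u)"
    by (simp add: r(2) st_norm_eq_sqrt_inner)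
  finally show ?thesis .
qed

lemma sigma_max_nonneg:
  assumes "1 \<le> N"
  shows "0 \<le> sigma_max TYPE('s::finite) N c"
proof -
  obtain e :: "nat \<Rightarrow> real^'s" where e: "st_vec N e" "st_inner N e e = 1"
    using st_unit_vector_exists[OF assms] by blast
  have "0 \<le> Max {l. gram_eigenvalue TYPE('s) N c l}"
    using rayleigh_le_Max_gram_eigenvalue[OF assms e(1), of c] st_inner_nonneg[of N "blk_apply N c e"]
    by (simp add: e(2))
  then show ?thesis by (simp add: sigma_max_def)
qed

section \<open>Stability of the residual and quasi-optimality\<close>

lemma LM_sum_eq_blk_apply:
  fixes h :: "nat \<Rightarrow> real^'s"
  assumes n: "n \<in> {1..N}" and "k n \<le> n" and "h 0 = 0"
  shows "(\<Sum>j=0..k n. c n j *\<^sub>R h (n - j)) = blk_apply N (LM_mat k c) h n"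
proof -
  have "(\<Sum>j=0..k n. c n j *\<^sub>R h (n - j)) = (\<Sum>j\<in>{j. j \<le> k n \<and> j < n}. c n j *\<^sub>R h (n - j))"
    using assms(2,3) by (intro sum.mono_neutral_right) (auto simp: le_less)
  also have "\<dots> = (\<Sum>m\<in>{m. 1 \<le> m \<and> m \<le> n \<and> n - m \<le> k n}. c n (n - m) *\<^sub>R h m)"
    by (rule sum.reindex_bij_witness[of _ "\<lambda>m. n - m" "\<lambda>j. n - j"]) auto
  also have "\<dots> = (\<Sum>m=1..N. LM_mat k c n m *\<^sub>R h m)"
    using n by (intro sum.mono_neutral_cong_left) (auto simp: LM_mat_def)
  finally show ?thesis using n by (simp add: blk_apply_def)
qed

text \<open>The terms with n - j = 0 involve only the initial value x0 and cancel in the difference;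
  accordingly A_LM and B_LM have no block column for w^0.\<close>

lemma st_res_diff:
  assumes "\<forall>n\<in>{1..Nt}. k n \<le> n"
  shows "(\<lambda>n. st_res f x0 T Nt k alpha beta w n - st_res f x0 T Nt k alpha beta y n)
    = (\<lambda>n. blk_apply Nt (LM_mat k alpha) (\<lambda>m. w m - y m) n
        - (T / real Nt) *\<^sub>R blk_apply Nt (LM_mat k beta)
            (\<lambda>m. f (w m) (real m * (T / real Nt)) - f (y m) (real m * (T / real Nt))) n)"
proof
  fix n
  define t where "t m = real m * (T / real Nt)" for m
  define hA where "hA m = ext0 x0 w m - ext0 x0 y m" for m
  define hB where "hB m = f (ext0 x0 w m) (t m) - f (ext0 x0 y m) (t m)" for m
  show "st_res f x0 T Nt k alpha beta w n - st_res f x0 T Nt k alpha beta y n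
    = blk_apply Nt (LM_mat k alpha) (\<lambda>m. w m - y m) n
        - (T / real Nt) *\<^sub>R blk_apply Nt (LM_mat k beta) (\<lambda>m. f (w m) (t m) - f (y m) (t m)) n"
  proof (cases "n \<in> {1..Nt}")
    case False
    then show ?thesis by (simp add: st_res_def blk_apply_def del: atLeastAtMost_iff)
  next
    case True
    have kn: "k n \<le> n" using True assms by blast
    have "lm_res f x0 T Nt k alpha beta w n - lm_res f x0 T Nt k alpha beta y n
        = (\<Sum>j=0..k n. alpha n j *\<^sub>R hA (n - j)) - (T / real Nt) *\<^sub>R (\<Sum>j=0..k n. beta n j *\<^sub>R hB (n - j))"
      unfolding lm_res_def hA_def hB_def t_def
      by (simp add: sum_subtractf scaleR_diff_right algebra_simps)
    also have "\<dots> = blk_apply Nt (LM_mat k alpha) hA n - (T / real Nt) *\<^sub>R blk_apply Nt (LM_mat k beta) hB n"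
    proof -
      have "hA 0 = 0" "hB 0 = 0" by (simp_all add: hA_def hB_def ext0_def)
      then show ?thesis
        using LM_sum_eq_blk_apply[where k=k and h=hA and c=alpha, OF True kn]
          LM_sum_eq_blk_apply[where k=k and h=hB and c=beta, OF True kn]
        by simp
    qed
    also have "\<dots> = blk_apply Nt (LM_mat k alpha) (\<lambda>m. w m - y m) n
        - (T / real Nt) *\<^sub>R blk_apply Nt (LM_mat k beta) (\<lambda>m. f (w m) (t m) - f (y m) (t m)) n"
    proof -
      have "blk_apply Nt c hA = blk_apply Nt c (\<lambda>m. w m - y m)"
        and "blk_apply Nt c hB = blk_apply Nt c (\<lambda>m. f (w m) (t m) - f (y m) (t m))" for c
        by (rule blk_apply_cong, simp add: hA_def hB_def ext0_def)+
      then show ?thesis by simp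
    qed
    finally show ?thesis using True by (simp add: st_res_def)
  qed
qed

lemma st_res_diff_bounds:
  fixes f :: "real^('s::finite) \<Rightarrow> real \<Rightarrow> real^'s" and x_init :: "real^'s" and T Lf :: real
    and Nt :: nat and k :: "nat \<Rightarrow> nat" and alpha beta :: "nat \<Rightarrow> nat \<Rightarrow> real"
    and w y :: "nat \<Rightarrow> real^'s"
  defines "dt \<equiv> T / real Nt"
    and "R \<equiv> st_res f x_init T Nt k alpha beta"
    and "sB_max \<equiv> sigma_max TYPE('s) Nt (LM_mat k beta)"
  assumes "0 < T" and "1 \<le> Nt" and "\<forall>n\<in>{1..Nt}. k n \<le> n" and "0 \<le> Lf"
    and lip: "\<forall>w y t. t \<in> {0..T} \<longrightarrow> norm (f w t - f y t) \<le> Lf * norm (w - y)"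
  shows "(sigma_min TYPE('s) Nt (LM_mat k alpha) - dt * Lf * sB_max) * st_norm Nt (\<lambda>n. w n - y n)
           \<le> st_norm Nt (\<lambda>n. R w n - R y n)"
    and "st_norm Nt (\<lambda>n. R w n - R y n)
           \<le> (sigma_max TYPE('s) Nt (LM_mat k alpha) + dt * Lf * sB_max) * st_norm Nt (\<lambda>n. w n - y n)"
proof -
  define D where "D = (\<lambda>m. w m - y m)"
  define E where "E = (\<lambda>m. f (w m) (real m * dt) - f (y m) (real m * dt))"
  define A where "A = blk_apply Nt (LM_mat k alpha) D"
  define B where "B = (\<lambda>n. dt *\<^sub>R blk_apply Nt (LM_mat k beta) E n)"
  have dt: "0 \<le> dt" using assms(4) by (simp add: dt_def)
  have R_diff: "(\<lambda>n. R w n - R y n) = (\<lambda>n. A n - B n)"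
    unfolding R_def A_def B_def D_def E_def dt_def using assms(6) by (rule st_res_diff)
  have "st_norm Nt E \<le> st_norm Nt (\<lambda>n. Lf *\<^sub>R D n)"
    unfolding st_norm_eq_L2_set
  proof (rule L2_set_mono)
    fix n assume n: "n \<in> {1..Nt}"
    have "real n * dt \<in> {0..T}"
      using n assms(4,5) by (auto simp: dt_def field_simps)
    then show "norm (E n) \<le> norm (Lf *\<^sub>R D n)"
      using lip assms(7) by (simp add: E_def D_def)
  qed simp
  then have E_bound: "st_norm Nt E \<le> Lf * st_norm Nt D"
    using assms(7) by (simp add: st_norm_scaleR)
  have "st_norm Nt B = dt * st_norm Nt (blk_apply Nt (LM_mat k beta) E)"
    using dt by (simp add: B_def st_norm_scaleR)
  also have "\<dots> \<le> dt * (sB_max * st_norm Nt E)"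
    unfolding sB_max_def using dt assms(5) by (intro mult_left_mono st_norm_blk_apply_le_sigma_max)
  also have "\<dots> \<le> dt * (sB_max * (Lf * st_norm Nt D))"
    unfolding sB_max_def using dt E_bound sigma_max_nonneg[OF assms(5)]
    by (intro mult_left_mono) simp_all
  finally have B_bound: "st_norm Nt B \<le> dt * Lf * sB_max * st_norm Nt D"
    by (simp add: algebra_simps)
  have "sigma_min TYPE('s) Nt (LM_mat k alpha) * st_norm Nt D \<le> st_norm Nt A"
    unfolding A_def using assms(5) by (rule sigma_min_le_st_norm_blk_apply)
  with B_bound st_norm_reverse_triangle[of Nt A B]
  show "(sigma_min TYPE('s) Nt (LM_mat k alpha) - dt * Lf * sB_max) * st_norm Nt (\<lambda>n. w n - y n)
           \<le> st_norm Nt (\<lambda>n. R w n - R y n)"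
    unfolding R_diff D_def[symmetric] by (simp add: algebra_simps)
  have "st_norm Nt A \<le> sigma_max TYPE('s) Nt (LM_mat k alpha) * st_norm Nt D"
    unfolding A_def using assms(5) by (rule st_norm_blk_apply_le_sigma_max)
  with B_bound st_norm_triangle_diff[of Nt A B]
  show "st_norm Nt (\<lambda>n. R w n - R y n)
           \<le> (sigma_max TYPE('s) Nt (LM_mat k alpha) + dt * Lf * sB_max) * st_norm Nt (\<lambda>n. w n - y n)"
    unfolding R_diff D_def[symmetric] by (simp add: algebra_simps)
qed

lemma minimal_residual_quasi_optimal:
  fixes err res :: "'a \<Rightarrow> real"
  assumes "0 < c1"
    and lower: "\<And>w. c1 * err w \<le> res w" and upper: "\<And>w. res w \<le> c2 * err w"
    and "xt \<in> S" and minimal: "\<forall>w\<in>S. res xt \<le> res w" and "w \<in> S"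
  shows "err xt \<le> c2 / c1 * err w"
proof -
  have "c1 * err xt \<le> c2 * err w"
    using lower[of xt] minimal \<open>w \<in> S\<close> upper[of w] by fastforce
  with \<open>0 < c1\<close> show ?thesis by (simp add: field_simps)
qed

lemma le_mult_INF:
  fixes g :: "'a \<Rightarrow> real"
  assumes "S \<noteq> {}" and "0 \<le> K" and bound: "\<And>w. w \<in> S \<Longrightarrow> a \<le> K * g w"
  shows "a \<le> K * (INF w\<in>S. g w)"
proof (cases "K = 0")
  case True
  with assms(1) bound show ?thesis by fastforce
next
  case False
  with assms(2) have K: "0 < K" by simp
  have "a / K \<le> (INF w\<in>S. g w)"
    using assms(1) bound K by (intro cINF_greatest) (simp_all add: pos_divide_le_eq mult.commute)
  with K show ?thesis by (simp add: pos_divide_le_eq mult.commute)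
qed

lemma residual_minimizer_error_bounds:
  fixes R :: "(nat \<Rightarrow> real^'s) \<Rightarrow> nat \<Rightarrow> real^'s" and x xt :: "nat \<Rightarrow> real^'s"
  assumes "1 \<le> Nt" and c1: "0 < c1" and c2: "0 \<le> c2"
    and lower: "\<And>w. c1 * st_norm Nt (\<lambda>n. x n - w n) \<le> st_norm Nt (R w)"
    and upper: "\<And>w. st_norm Nt (R w) \<le> c2 * st_norm Nt (\<lambda>n. x n - w n)"
    and "xt \<in> S" and "\<forall>w\<in>S. st_norm Nt (R xt) \<le> st_norm Nt (R w)"
  shows "st_norm Nt (\<lambda>n. x n - xt n) \<le> c2 / c1 * (INF w\<in>S. st_norm Nt (\<lambda>n. x n - w n))"
    and "(MAX n\<in>{1..Nt}. norm (x n - xt n))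
           \<le> sqrt (real Nt) * (c2 / c1) * (INF w\<in>S. MAX n\<in>{1..Nt}. norm (x n - w n))"
proof -
  have quasi_optimal: "st_norm Nt (\<lambda>n. x n - xt n) \<le> c2 / c1 * st_norm Nt (\<lambda>n. x n - w n)"
    if "w \<in> S" for w
    using c1 lower upper assms(6,7) that by (rule minimal_residual_quasi_optimal)
  have "S \<noteq> {}" using \<open>xt \<in> S\<close> by blast
  then show "st_norm Nt (\<lambda>n. x n - xt n) \<le> c2 / c1 * (INF w\<in>S. st_norm Nt (\<lambda>n. x n - w n))"
    using c1 c2 quasi_optimal by (intro le_mult_INF) simp_all
  show "(MAX n\<in>{1..Nt}. norm (x n - xt n))
      \<le> sqrt (real Nt) * (c2 / c1) * (INF w\<in>S. MAX n\<in>{1..Nt}. norm (x n - w n))"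
  proof (rule le_mult_INF[OF \<open>S \<noteq> {}\<close>])
    show "0 \<le> sqrt (real Nt) * (c2 / c1)" using c1 c2 by simp
    fix w assume "w \<in> S"
    have "(MAX n\<in>{1..Nt}. norm (x n - xt n)) \<le> st_norm Nt (\<lambda>n. x n - xt n)"
      using \<open>1 \<le> Nt\<close> by (rule Max_norm_le_st_norm)
    also have "\<dots> \<le> c2 / c1 * st_norm Nt (\<lambda>n. x n - w n)" using \<open>w \<in> S\<close> by (rule quasi_optimal)
    also have "\<dots> \<le> c2 / c1 * (sqrt (real Nt) * (MAX n\<in>{1..Nt}. norm (x n - w n)))"
      using c1 c2 st_norm_le_sqrt_Max_norm[OF \<open>1 \<le> Nt\<close>] by (intro mult_left_mono) simp_all
    finally show "(MAX n\<in>{1..Nt}. norm (x n - xt n))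
        \<le> sqrt (real Nt) * (c2 / c1) * (MAX n\<in>{1..Nt}. norm (x n - w n))"
      by (simp add: ac_simps)
  qed
qed

theorem mainTheorem5:
  fixes f :: "real^'s \<Rightarrow> real \<Rightarrow> real^'s"
    and x0 :: "real^'s" and T :: real and Nt :: nat
    and k :: "nat \<Rightarrow> nat" and alpha beta :: "nat \<Rightarrow> nat \<Rightarrow> real"
    and Pi_b :: "nat \<Rightarrow> nat \<Rightarrow> real^'s" and nst :: nat
    and Lf :: real and x xt :: "nat \<Rightarrow> real^'s"
  defines "dt \<equiv> T / real Nt"
    and "S \<equiv> trial_space x0 Pi_b nst"
    and "sA_max \<equiv> sigma_max TYPE('s) Nt (LM_mat k alpha)"
    and "sA_min \<equiv> sigma_min TYPE('s) Nt (LM_mat k alpha)"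
    and "sB_max \<equiv> sigma_max TYPE('s) Nt (LM_mat k beta)"
  assumes T_pos: "0 < T" and Nt_pos: "1 \<le> Nt"
    and k_le: "\<forall>n\<in>{1..Nt}. k n \<le> n"
    and alpha0: "\<forall>n\<in>{1..Nt}. alpha n 0 \<noteq> 0"
    and Lf_pos: "0 < Lf"
    and lip: "\<forall>w y t. t \<in> {0..T} \<longrightarrow> norm (f w t - f y t) \<le> Lf * norm (w - y)"
    and dt_small: "dt * Lf * sB_max < sA_min"
    and x_sol: "\<forall>n\<in>{1..Nt}. lm_res f x0 T Nt k alpha beta x n = 0"
    and xt_in: "xt \<in> S"
    and xt_min: "\<forall>w\<in>S. st_norm Nt (st_res f x0 T Nt k alpha beta xt)
                          \<le> st_norm Nt (st_res f x0 T Nt k alpha beta w)"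
  shows "let Lam = (sA_max - sA_min + 2 * dt * Lf * sB_max) / (sA_min - dt * Lf * sB_max) in
         st_norm Nt (\<lambda>n. x n - xt n) \<le> (1 + Lam) * (INF w\<in>S. st_norm Nt (\<lambda>n. x n - w n))
       \<and> (MAX n\<in>{1..Nt}. norm (x n - xt n))
           \<le> sqrt (real Nt) * (1 + Lam) * (INF w\<in>S. MAX n\<in>{1..Nt}. norm (x n - w n))"
proof -
  have dt: "dt = T / real Nt" and sA_max: "sA_max = sigma_max TYPE('s) Nt (LM_mat k alpha)"
    and sA_min: "sA_min = sigma_min TYPE('s) Nt (LM_mat k alpha)"
    and sB_max: "sB_max = sigma_max TYPE('s) Nt (LM_mat k beta)"
    using \<open>dt \<equiv> _\<close> \<open>sA_max \<equiv> _\<close> \<open>sA_min \<equiv> _\<close> \<open>sB_max \<equiv> _\<close> by simp_all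
  define R where "R = st_res f x0 T Nt k alpha beta"
  define c1 where "c1 = sA_min - dt * Lf * sB_max"
  define c2 where "c2 = sA_max + dt * Lf * sB_max"
  have c1: "0 < c1" using dt_small by (simp add: c1_def)
  have "0 \<le> sA_max" "0 \<le> sB_max" "0 \<le> dt"
    using sigma_max_nonneg[OF Nt_pos] T_pos by (simp_all add: sA_max sB_max dt)
  then have c2: "0 \<le> c2" using Lf_pos by (simp add: c2_def)
  have one_plus_Lam: "1 + (sA_max - sA_min + 2 * dt * Lf * sB_max) / (sA_min - dt * Lf * sB_max) = c2 / c1"
    using c1 by (simp add: c1_def c2_def field_simps)
  have R_x: "R x = (\<lambda>_. 0)" using x_sol by (auto simp: R_def st_res_def)
  have stability: "c1 * st_norm Nt (\<lambda>n. x n - w n) \<le> st_norm Nt (R w)"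
    "st_norm Nt (R w) \<le> c2 * st_norm Nt (\<lambda>n. x n - w n)" for w
    using st_res_diff_bounds[where x_init=x0 and alpha=alpha and beta=beta and w=w and y=x,
          OF T_pos Nt_pos k_le less_imp_le[OF Lf_pos] lip]
    by (simp_all add: R_x R_def[symmetric] c1_def c2_def dt sA_max sA_min sB_max st_norm_minus_commute[of Nt w x])
  show ?thesis
    unfolding Let_def one_plus_Lam
    using residual_minimizer_error_bounds[OF Nt_pos c1 c2 stability xt_in] xt_min
    by (simp add: R_def)
qed

end
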